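(* Let $(X,\le)$ be a partially ordered set and $\tau$ a topology on $X$. Assume that: (i) every nonempty $\tau$-open set contains a diamond $J(a,b):=\{c\in X:a\le c\le b\}$ with nonempty $\tau$-interior; (ii) for any sequences $(a_n),(b_n)\subset X$ with $a_n\le a_{n+1}\le b_{n+1}\le b_n$ for all $n\in\mathbb N$, there is $c\in X$ with $a_n\le c\le b_n$ for all $n$. Then for every sequence $(U_n)$ of $\tau$-open $\tau$-dense subsets of $X$, the set $\bigcap_nU_n$ is $\tau$-dense. *)

theory Defs
  imports "HOL-Analysis.Analysis"
begin

definition diamond :: "'a set \<Rightarrow> ('a \<Rightarrow> 'a \<Rightarrow> bool) \<Rightarrow> 'a \<Rightarrow> 'a \<Rightarrow> 'a set" where
  "diamond X le a b = {c \<in> X. le a c \<and> le c b}"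

definition partial_order_on_set :: "'a set \<Rightarrow> ('a \<Rightarrow> 'a \<Rightarrow> bool) \<Rightarrow> bool" where
  "partial_order_on_set X le \<longleftrightarrow>
     (\<forall>x\<in>X. le x x) \<and>
     (\<forall>x\<in>X. \<forall>y\<in>X. le x y \<and> le y x \<longrightarrow> x = y) \<and>
     (\<forall>x\<in>X. \<forall>y\<in>X. \<forall>z\<in>X. le x y \<and> le y z \<longrightarrow> le x z)"

definition dense_in :: "'a topology \<Rightarrow> 'a set \<Rightarrow> bool" where
  "dense_in T S \<longleftrightarrow> S \<subseteq> topspace T \<and> T closure_of S = topspace T"

end

theory Submission
  imports Defs
begin

text \<open>Inside a nonempty open set \<open>W\<close> choose diamonds \<open>J(a\<^sub>n, b\<^sub>n) \<subseteq> U\<^sub>n\<close>, each inside the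
  interior of the previous one. Nested diamonds have monotone endpoints, so the completeness
  hypothesis yields a point \<open>c\<close> lying in all of them, hence in \<open>W \<inter> \<Inter>\<^sub>n U\<^sub>n\<close>.\<close>

lemma dense_in_iff_meets_open:
  "dense_in T S \<longleftrightarrow> S \<subseteq> topspace T \<and> (\<forall>W. openin T W \<and> W \<noteq> {} \<longrightarrow> S \<inter> W \<noteq> {})"
  unfolding dense_in_def dense_intersects_open ..

lemma endpoints_le_of_diamond_subset:
  assumes refl: "\<And>x. x \<in> X \<Longrightarrow> le x x"
    and trans: "\<And>x y z. x \<in> X \<Longrightarrow> y \<in> X \<Longrightarrow> z \<in> X \<Longrightarrow> le x y \<Longrightarrow> le y z \<Longrightarrow> le x z"
    and X: "a \<in> X" "b \<in> X" "a' \<in> X" "b' \<in> X"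
    and ne: "diamond X le a' b' \<noteq> {}"
    and sub: "diamond X le a' b' \<subseteq> diamond X le a b"
  shows "le a a' \<and> le a' b' \<and> le b' b"
proof -
  obtain c where "c \<in> X" "le a' c" "le c b'" using ne unfolding diamond_def by blast
  then have "le a' b'" using trans X by blast
  then have "a' \<in> diamond X le a b" "b' \<in> diamond X le a b"
    using sub refl X unfolding diamond_def by auto
  with \<open>le a' b'\<close> show ?thesis unfolding diamond_def by blast
qed

lemma diamond_in_open_dense:
  assumes diam: "\<And>V. openin T V \<Longrightarrow> V \<noteq> {} \<Longrightarrow>
        \<exists>a\<in>topspace T. \<exists>b\<in>topspace T. diamond (topspace T) le a b \<subseteq> V \<and>
           T interior_of (diamond (topspace T) le a b) \<noteq> {}"
    and V: "openin T V" "V \<noteq> {}"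
    and U: "openin T U" "dense_in T U"
  shows "\<exists>a\<in>topspace T. \<exists>b\<in>topspace T. diamond (topspace T) le a b \<subseteq> V \<inter> U \<and>
           T interior_of (diamond (topspace T) le a b) \<noteq> {}"
proof (rule diam)
  show "openin T (V \<inter> U)" using V U by blast
  show "V \<inter> U \<noteq> {}" using U V unfolding dense_in_iff_meets_open by blast
qed

lemma nested_diamonds_in_open_dense:
  assumes diam: "\<And>V. openin T V \<Longrightarrow> V \<noteq> {} \<Longrightarrow>
        \<exists>a\<in>topspace T. \<exists>b\<in>topspace T. diamond (topspace T) le a b \<subseteq> V \<and>
           T interior_of (diamond (topspace T) le a b) \<noteq> {}"
    and U: "\<And>n. openin T (U n) \<and> dense_in T (U n)"
    and W: "openin T W" "W \<noteq> {}"
  obtains a b where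
    "\<forall>n. a n \<in> topspace T \<and> b n \<in> topspace T"
    "\<forall>n. diamond (topspace T) le (a n) (b n) \<subseteq> W \<inter> U n"
    "\<forall>n. T interior_of (diamond (topspace T) le (a n) (b n)) \<noteq> {}"
    "\<forall>n. diamond (topspace T) le (a (Suc n)) (b (Suc n)) \<subseteq> diamond (topspace T) le (a n) (b n)"
proof -
  define J where "J p = diamond (topspace T) le (fst p) (snd p)" for p
  define good where "good n p \<longleftrightarrow> fst p \<in> topspace T \<and> snd p \<in> topspace T \<and>
      J p \<subseteq> W \<inter> U n \<and> T interior_of J p \<noteq> {}" for n p
  have start: "\<exists>p. good 0 p"
  proof -
    obtain a b where "a \<in> topspace T" "b \<in> topspace T"
        "diamond (topspace T) le a b \<subseteq> W \<inter> U 0"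
        "T interior_of diamond (topspace T) le a b \<noteq> {}"
      using diamond_in_open_dense[OF diam W U[of 0, THEN conjunct1] U[of 0, THEN conjunct2]] by blast
    then have "good 0 (a, b)" unfolding good_def J_def by simp
    then show ?thesis ..
  qed
  have step: "\<exists>q. good (Suc n) q \<and> J q \<subseteq> J p" if "good n p" for n p
  proof -
    have "openin T (T interior_of J p)" "T interior_of J p \<noteq> {}"
      using that unfolding good_def by auto
    then obtain a b where "a \<in> topspace T" "b \<in> topspace T"
        "diamond (topspace T) le a b \<subseteq> T interior_of J p \<inter> U (Suc n)"
        "T interior_of diamond (topspace T) le a b \<noteq> {}"
      using diamond_in_open_dense[OF diam _ _ U[of "Suc n", THEN conjunct1] U[of "Suc n", THEN conjunct2]]
      by blast
    moreover have "T interior_of J p \<subseteq> J p" by (rule interior_of_subset)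
    ultimately have "good (Suc n) (a, b) \<and> J (a, b) \<subseteq> J p"
      using that unfolding good_def J_def by auto
    then show ?thesis ..
  qed
  obtain f where f: "\<forall>n. good n (f n) \<and> J (f (Suc n)) \<subseteq> J (f n)"
    using dependent_nat_choice[of good "\<lambda>_ p q. J q \<subseteq> J p", OF start step] by blast
  show ?thesis
    by (rule that[of "fst \<circ> f" "snd \<circ> f"]) (use f in \<open>auto simp: good_def J_def\<close>)
qed

theorem mainTheorem17:
  fixes T :: "'a topology" and le :: "'a \<Rightarrow> 'a \<Rightarrow> bool"
  assumes po: "partial_order_on_set (topspace T) le"
    and diam: "\<And>U. openin T U \<Longrightarrow> U \<noteq> {} \<Longrightarrow>
        \<exists>a\<in>topspace T. \<exists>b\<in>topspace T. diamond (topspace T) le a b \<subseteq> U \<and>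
           T interior_of (diamond (topspace T) le a b) \<noteq> {}"
    and nested: "\<And>a b :: nat \<Rightarrow> 'a. (\<forall>n. a n \<in> topspace T \<and> b n \<in> topspace T) \<Longrightarrow>
        (\<forall>n. le (a n) (a (Suc n)) \<and> le (a (Suc n)) (b (Suc n)) \<and> le (b (Suc n)) (b n)) \<Longrightarrow>
        \<exists>c\<in>topspace T. \<forall>n. le (a n) c \<and> le c (b n)"
    and U: "\<And>n::nat. openin T (U n) \<and> dense_in T (U n)"
  shows "dense_in T (\<Inter>n. U n)"
  unfolding dense_in_iff_meets_open
proof (intro conjI allI impI)
  show "(\<Inter>n. U n) \<subseteq> topspace T" using U[of 0] unfolding dense_in_def by blast
  fix W assume W: "openin T W \<and> W \<noteq> {}"
  obtain a b where X: "\<forall>n. a n \<in> topspace T \<and> b n \<in> topspace T"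
    and inU: "\<forall>n. diamond (topspace T) le (a n) (b n) \<subseteq> W \<inter> U n"
    and ne: "\<forall>n. T interior_of (diamond (topspace T) le (a n) (b n)) \<noteq> {}"
    and sub: "\<forall>n. diamond (topspace T) le (a (Suc n)) (b (Suc n)) \<subseteq> diamond (topspace T) le (a n) (b n)"
    by (rule nested_diamonds_in_open_dense[where U = U and W = W, OF diam U W[THEN conjunct1] W[THEN conjunct2]])
  have refl: "\<And>x. x \<in> topspace T \<Longrightarrow> le x x"
    and trans: "\<And>x y z. x \<in> topspace T \<Longrightarrow> y \<in> topspace T \<Longrightarrow> z \<in> topspace T \<Longrightarrow>
        le x y \<Longrightarrow> le y z \<Longrightarrow> le x z"
    using po unfolding partial_order_on_set_def by blast+
  have "le (a n) (a (Suc n)) \<and> le (a (Suc n)) (b (Suc n)) \<and> le (b (Suc n)) (b n)" for n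
  proof (rule endpoints_le_of_diamond_subset[OF refl trans])
    show "diamond (topspace T) le (a (Suc n)) (b (Suc n)) \<noteq> {}"
      using ne interior_of_subset[of T] by blast
  qed (use X sub in auto)
  then obtain c where "c \<in> topspace T" "\<And>n. le (a n) c \<and> le c (b n)"
    using nested[OF X] by blast
  then have "c \<in> W \<inter> U n" for n using inU unfolding diamond_def by blast
  then show "(\<Inter>n. U n) \<inter> W \<noteq> {}" by blast
qed

end
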